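(* In the entry–exit model described in the context (under all its standing assumptions (A1)–(A8)), let $v^*$ be the unique fixed point in $\mathscr C$ of the Bellman operator $(Tv)(\phi,p)=\pi(\phi,p)+\beta\max\{0,\int v(\phi',p)\Gamma(\phi,\mathrm d\phi')\}$. Then there exists a unique price $p^*>0$ such that $$\int v^*(\phi,p^* )\,\gamma(\mathrm d\phi)=c_e.$$
   Context: Let $\mathbb R_+=[0,\infty)$ and let $\mathscr B$ denote its Borel sets; integrals are over $\mathbb R_+$. "Increasing" for functions on $\mathbb R_+^2$ refers to the componentwise order. Standing assumptions: (A1) A demand function $D$ on $\mathbb R_+$ is continuous and strictly decreasing with $D(0)=\infty$ and $\lim_{p\to\infty}D(p)=0$. (A2) Profit $\pi(\phi,p)$ and output $q(\phi,p)$ are functions of productivity $\phi\ge 0$ and price $p\ge0$; both are continuous and strictly increasing on $\mathbb R_+^2$; $q\ge 0$; and $\pi(\phi,p)<0$ if $\phi=0$ or $p=0$. (A3) $\Gamma$ is a Markov transition kernel on $\mathbb R_+$ which is monotone increasing (i.e. $\phi\mapsto\Gamma(\phi,[0,a])$ is decreasing for every $a\ge0$); $\Gamma^n$ denotes its $n$-step kernel. Moreover (a) for each $a>0$ and $\phi\ge0$ there is $n\in\mathbb N$ with $\Gamma^n(\phi,[0,a))>0$; (b) for each $p>0$ there exists $\phi\ge0$ with $\int \pi(\phi',p)\Gamma(\phi,\mathrm d\phi')\ge 0$. $\beta=1/(1+r)$ for a fixed $r>0$. (A4) $\gamma$ is a Borel probability measure on $\mathbb R_+$ with $\int q(\phi,p)\gamma(\mathrm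 d\phi)<\infty$ for all $p$ and $\gamma([0,a])>0$ for all $a>0$; $c_e>0$ is a fixed entry cost. (A5) There exists $p>0$ with $\int \pi(\phi,p)\gamma(\mathrm d\phi)\ge c_e$. (A6) For every $p$, $\sum_{t\ge0}\beta^t\int \pi(\phi',p)\Gamma^t(0,\mathrm d\phi')\le 0$. (A7) Let $\{\phi_t\}$ be the process with $\phi_0\sim\gamma$ and $\phi_{t+1}\sim\Gamma(\phi_t,\cdot)$. There is $\delta\in(\beta,1)$ with $\sum_{t\ge0}\delta^t\,\mathbb E\,\pi(\phi_t,p)<\infty$ for all $p\ge0$. Fix a constant $b$ with $\pi+b\ge1$ and set $\kappa(\phi,p):=\sum_{t\ge0}\delta^t\mathbb E_\phi[\pi(\phi_t,p)+b]$, where under $\mathbb E_\phi$ the process starts at $\phi_0=\phi$ and evolves via $\Gamma$; $\kappa$ is assumed finite everywhere. For $f$ on $\mathbb R_+^2$ let $\|f\|_\kappa:=\sup|f/\kappa|$. Let $\mathscr C$ be the set of continuous, increasing functions $f$ on $\mathbb R_+^2$ with $\|f\|_\kappa<\infty$, with metric $d(v,w):=\|w-v\|_\kappa$; the Bellman operator is a contraction on $(\mathscr C,d)$, so $v^*$ is well defined. (A8) For every $u\in\mathscr C$, the map $(\phi,p)\mapsto\int u(\phi',p)\Gamma(\phi,\mathrm d\phi')$ is continuous. *)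

theory Defs
  imports "HOL-Probability.Probability"
begin

definition Sp :: "real measure" where
  "Sp = restrict_space borel {0..}"

fun kpow :: "(real \<Rightarrow> real measure) \<Rightarrow> nat \<Rightarrow> real \<Rightarrow> real measure" where
  "kpow \<Gamma> 0 = (\<lambda>\<phi>. return Sp \<phi>)"
| "kpow \<Gamma> (Suc n) = (\<lambda>\<phi>. bind (kpow \<Gamma> n \<phi>) \<Gamma>)"

definition incr2 :: "(real \<Rightarrow> real \<Rightarrow> real) \<Rightarrow> bool" where
  "incr2 f \<longleftrightarrow> (\<forall>x y x' y'. 0 \<le> x \<and> x \<le> x' \<and> 0 \<le> y \<and> y \<le> y' \<longrightarrow> f x y \<le> f x' y')"

definition strict_incr2 :: "(real \<Rightarrow> real \<Rightarrow> real) \<Rightarrow> bool" where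
  "strict_incr2 f \<longleftrightarrow> (\<forall>x y x' y'. 0 \<le> x \<and> x \<le> x' \<and> 0 \<le> y \<and> y \<le> y' \<and> (x, y) \<noteq> (x', y')
      \<longrightarrow> f x y < f x' y')"

definition kappa :: "(real \<Rightarrow> real measure) \<Rightarrow> (real \<Rightarrow> real \<Rightarrow> real) \<Rightarrow> real \<Rightarrow> real
    \<Rightarrow> real \<Rightarrow> real \<Rightarrow> real" where
  "kappa \<Gamma> \<pi> b \<delta> \<phi> p = (\<Sum>t. \<delta> ^ t * (\<integral>\<phi>'. (\<pi> \<phi>' p + b) \<partial>(kpow \<Gamma> t \<phi>)))"

definition Cspace :: "(real \<Rightarrow> real measure) \<Rightarrow> (real \<Rightarrow> real \<Rightarrow> real) \<Rightarrow> real \<Rightarrow> real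
    \<Rightarrow> (real \<Rightarrow> real \<Rightarrow> real) set" where
  "Cspace \<Gamma> \<pi> b \<delta> = {f. continuous_on ({0..} \<times> {0..}) (\<lambda>(x, y). f x y) \<and> incr2 f \<and>
      (\<exists>M. \<forall>\<phi>\<ge>0. \<forall>p\<ge>0. \<bar>f \<phi> p\<bar> \<le> M * kappa \<Gamma> \<pi> b \<delta> \<phi> p)}"

definition bellman :: "(real \<Rightarrow> real measure) \<Rightarrow> (real \<Rightarrow> real \<Rightarrow> real) \<Rightarrow> real
    \<Rightarrow> (real \<Rightarrow> real \<Rightarrow> real) \<Rightarrow> real \<Rightarrow> real \<Rightarrow> real" where
  "bellman \<Gamma> \<pi> \<beta> v \<phi> p = \<pi> \<phi> p + \<beta> * max 0 (\<integral>\<phi>'. v \<phi>' p \<partial>(\<Gamma> \<phi>))"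

end

theory Submission
  imports Defs
begin

(* Let g p be the integral of v(phi, p) against gamma. The Bellman equation gives v >= pi, and
   v is strictly increasing in p because pi is and the continuation value is monotone; so g is
   strictly increasing and g p >= c_e at the price provided by (A5). At p = 0 profits are
   negative, hence w = max 0 (v(., 0)) satisfies w <= beta Gamma w. Since |v| <= M kappa and
   kappa, a delta-resolvent of Gamma, satisfies delta Gamma kappa <= kappa, iteration gives
   w <= M (beta/delta)^n kappa, which tends to 0 as beta < delta; thus g 0 <= 0 < c_e. The
   bound |v| <= M kappa and (A7) make v(., p) gamma-integrable, so g is continuous by dominated
   convergence, and the intermediate value theorem yields exactly one solution. *)

lemma space_Sp: "space Sp = {0..}"
  by (simp add: Sp_def space_restrict_space)

lemma space_eq_Sp: "sets N = sets Sp \<Longrightarrow> space N = {0..}"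
  using sets_eq_imp_space_eq space_Sp by metis

lemma borel_measurable_Sp_continuous_on:
  "continuous_on {0..} f \<Longrightarrow> f \<in> borel_measurable Sp"
  unfolding Sp_def by (rule borel_measurable_continuous_on_restrict)

lemma continuous_on_slice_fst:
  assumes "continuous_on (A \<times> B) (\<lambda>(x, y). f x y)" "y \<in> B"
  shows "continuous_on A (\<lambda>x. f x y)"
  by (rule continuous_on_compose2[OF assms(1), where f="\<lambda>x. (x, y)", simplified])
     (use assms(2) in \<open>auto intro!: continuous_intros\<close>)

lemma continuous_on_slice_snd:
  assumes "continuous_on (A \<times> B) (\<lambda>(x, y). f x y)" "x \<in> A"
  shows "continuous_on B (f x)"
  by (rule continuous_on_compose2[OF assms(1), where f="\<lambda>y. (x, y)", simplified])
     (use assms(2) in \<open>auto intro!: continuous_intros\<close>)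

lemma kpow_measurable:
  assumes "\<Gamma> \<in> Sp \<rightarrow>\<^sub>M prob_algebra Sp"
  shows "kpow \<Gamma> t \<in> Sp \<rightarrow>\<^sub>M prob_algebra Sp"
proof (induction t)
  case 0
  then show ?case using measurable_return_prob_space[of Sp] by (simp add: fun_eq_iff)
next
  case (Suc t)
  then show ?case using assms by (simp add: measurable_bind_prob_space)
qed

lemma kpow_in_prob_algebra:
  assumes "\<Gamma> \<in> Sp \<rightarrow>\<^sub>M prob_algebra Sp" "x \<in> space Sp"
  shows "kpow \<Gamma> t x \<in> space (prob_algebra Sp)"
  using measurable_space[OF kpow_measurable[OF assms(1)] assms(2)] .

lemma kpow_Suc_bind:
  assumes \<Gamma>: "\<Gamma> \<in> Sp \<rightarrow>\<^sub>M prob_algebra Sp" and x: "x \<in> space Sp"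
  shows "kpow \<Gamma> (Suc t) x = \<Gamma> x \<bind> kpow \<Gamma> t"
  using x
proof (induction t arbitrary: x)
  case 0
  have "sets (\<Gamma> x) = sets Sp"
    using measurable_space[OF \<Gamma> 0] by (simp add: space_prob_algebra)
  then show ?case
    using bind_return[OF measurable_prob_algebraD[OF \<Gamma>] 0] bind_return''[of "\<Gamma> x" Sp]
    by (simp add: fun_eq_iff)
next
  case (Suc t)
  have "kpow \<Gamma> (Suc (Suc t)) x = (\<Gamma> x \<bind> kpow \<Gamma> t) \<bind> \<Gamma>"
    using Suc by simp
  also have "\<dots> = \<Gamma> x \<bind> (\<lambda>y. kpow \<Gamma> t y \<bind> \<Gamma>)"
    using measurable_prob_algebraD[OF kpow_measurable[OF \<Gamma>]] measurable_prob_algebraD[OF \<Gamma>]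
      measurable_space[OF \<Gamma> Suc.prems]
    by (intro bind_assoc[where N=Sp and R=Sp])
       (auto simp: space_prob_algebra cong: measurable_cong_sets)
  finally show ?case by simp
qed

lemma suminf_split_head_ennreal: "(\<Sum>n. f n :: ennreal) = (\<Sum>n. f (Suc n)) + f 0"
  using sums_Suc[OF summable_sums[OF summableI[of "\<lambda>n. f (Suc n)"]]]
  by (rule sums_unique[symmetric])

definition kernel_resolvent ::
    "(real \<Rightarrow> real measure) \<Rightarrow> real \<Rightarrow> (real \<Rightarrow> ennreal) \<Rightarrow> real \<Rightarrow> ennreal" where
  "kernel_resolvent \<Gamma> \<delta> f x = (\<Sum>t. ennreal (\<delta> ^ t) * (\<integral>\<^sup>+y. f y \<partial>kpow \<Gamma> t x))"

lemma borel_measurable_kernel_resolvent: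
  assumes "\<Gamma> \<in> Sp \<rightarrow>\<^sub>M prob_algebra Sp" "f \<in> borel_measurable Sp"
  shows "kernel_resolvent \<Gamma> \<delta> f \<in> borel_measurable Sp"
proof -
  have "(\<lambda>x. \<integral>\<^sup>+y. f y \<partial>kpow \<Gamma> t x) \<in> borel_measurable Sp" for t
    using measurable_compose[OF measurable_prob_algebraD[OF kpow_measurable[OF assms(1)]]
        nn_integral_measurable_subprob_algebra[OF assms(2)]]
    by (simp add: o_def)
  then show ?thesis
    unfolding kernel_resolvent_def[abs_def]
    by (intro borel_measurable_suminf_order borel_measurable_times_ennreal) auto
qed

lemma nn_integral_kernel_resolvent:
  assumes \<Gamma>: "\<Gamma> \<in> Sp \<rightarrow>\<^sub>M prob_algebra Sp" and f: "f \<in> borel_measurable Sp"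
    and N: "sets N = sets Sp"
  shows "(\<integral>\<^sup>+x. kernel_resolvent \<Gamma> \<delta> f x \<partial>N)
      = (\<Sum>t. ennreal (\<delta> ^ t) * (\<integral>\<^sup>+y. f y \<partial>(N \<bind> kpow \<Gamma> t)))"
proof -
  have kpow_N: "kpow \<Gamma> t \<in> N \<rightarrow>\<^sub>M subprob_algebra Sp" for t
    using measurable_prob_algebraD[OF kpow_measurable[OF \<Gamma>]]
    by (simp add: measurable_cong_sets[OF N refl])
  have meas: "(\<lambda>x. \<integral>\<^sup>+y. f y \<partial>kpow \<Gamma> t x) \<in> borel_measurable N" for t
    using measurable_compose[OF kpow_N nn_integral_measurable_subprob_algebra[OF f]]
    by (simp add: o_def)
  have "(\<integral>\<^sup>+x. kernel_resolvent \<Gamma> \<delta> f x \<partial>N)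
      = (\<Sum>t. \<integral>\<^sup>+x. ennreal (\<delta> ^ t) * (\<integral>\<^sup>+y. f y \<partial>kpow \<Gamma> t x) \<partial>N)"
    unfolding kernel_resolvent_def using meas
    by (intro nn_integral_suminf borel_measurable_times_ennreal) auto
  also have "\<dots> = (\<Sum>t. ennreal (\<delta> ^ t) * (\<integral>\<^sup>+x. \<integral>\<^sup>+y. f y \<partial>kpow \<Gamma> t x \<partial>N))"
    using meas by (simp add: nn_integral_cmult)
  also have "\<dots> = (\<Sum>t. ennreal (\<delta> ^ t) * (\<integral>\<^sup>+y. f y \<partial>(N \<bind> kpow \<Gamma> t)))"
    by (simp add: nn_integral_bind[OF f kpow_N])
  finally show ?thesis .
qed

lemma kernel_resolvent_excessive:
  assumes \<Gamma>: "\<Gamma> \<in> Sp \<rightarrow>\<^sub>M prob_algebra Sp" and f: "f \<in> borel_measurable Sp"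
    and \<delta>: "0 \<le> \<delta>" and x: "x \<in> space Sp"
  shows "ennreal \<delta> * (\<integral>\<^sup>+y. kernel_resolvent \<Gamma> \<delta> f y \<partial>\<Gamma> x) \<le> kernel_resolvent \<Gamma> \<delta> f x"
proof -
  let ?a = "\<lambda>t. ennreal (\<delta> ^ t) * (\<integral>\<^sup>+y. f y \<partial>kpow \<Gamma> t x)"
  have "sets (\<Gamma> x) = sets Sp"
    using measurable_space[OF \<Gamma> x] by (simp add: space_prob_algebra)
  then have "(\<integral>\<^sup>+y. kernel_resolvent \<Gamma> \<delta> f y \<partial>\<Gamma> x)
      = (\<Sum>t. ennreal (\<delta> ^ t) * (\<integral>\<^sup>+y. f y \<partial>kpow \<Gamma> (Suc t) x))"
    by (simp only: nn_integral_kernel_resolvent[OF \<Gamma> f] kpow_Suc_bind[OF \<Gamma> x])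
  then have "ennreal \<delta> * (\<integral>\<^sup>+y. kernel_resolvent \<Gamma> \<delta> f y \<partial>\<Gamma> x) = (\<Sum>t. ?a (Suc t))"
    using \<delta> by (simp add: ennreal_mult' mult.assoc del: kpow.simps)
  also have "\<dots> \<le> (\<Sum>t. ?a (Suc t)) + ?a 0"
    by simp
  also have "\<dots> = (\<Sum>t. ?a t)"
    by (rule suminf_split_head_ennreal[symmetric])
  finally show ?thesis unfolding kernel_resolvent_def .
qed

lemma dominated_subinvariant_eq_0:
  fixes \<Gamma> :: "'a \<Rightarrow> 'a measure" and w K :: "'a \<Rightarrow> ennreal"
  assumes \<beta>\<delta>: "0 < \<beta>" "\<beta> < \<delta>"
    and K_excessive: "\<And>x. x \<in> S \<Longrightarrow> ennreal \<delta> * (\<integral>\<^sup>+y. K y \<partial>\<Gamma> x) \<le> K x"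
    and K_meas: "\<And>x. x \<in> S \<Longrightarrow> K \<in> borel_measurable (\<Gamma> x)"
    and \<Gamma>_S: "\<And>x. x \<in> S \<Longrightarrow> space (\<Gamma> x) \<subseteq> S"
    and w_sub: "\<And>x. x \<in> S \<Longrightarrow> w x \<le> ennreal \<beta> * (\<integral>\<^sup>+y. w y \<partial>\<Gamma> x)"
    and w_dom: "\<And>x. x \<in> S \<Longrightarrow> w x \<le> C * K x"
    and C_finite: "C < \<infinity>" and x_S: "x \<in> S" and Kx_finite: "K x < \<infinity>"
  shows "w x = 0"
proof -
  let ?q = "\<beta> / \<delta>"
  have q: "0 \<le> ?q" "?q < 1"
    using \<beta>\<delta> by auto
  have \<beta>_eq: "ennreal \<beta> = ennreal ?q * ennreal \<delta>"
    using \<beta>\<delta> by (simp add: ennreal_mult'[symmetric])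
  have decay: "\<forall>x\<in>S. w x \<le> ennreal (?q ^ n) * (C * K x)" for n
  proof (induction n)
    case 0
    then show ?case using w_dom by simp
  next
    case (Suc n)
    show ?case
    proof
      fix x assume x: "x \<in> S"
      have "(\<integral>\<^sup>+y. w y \<partial>\<Gamma> x) \<le> (\<integral>\<^sup>+y. ennreal (?q ^ n) * (C * K y) \<partial>\<Gamma> x)"
        using Suc.IH \<Gamma>_S[OF x] by (intro nn_integral_mono) blast
      also have "\<dots> = ennreal (?q ^ n) * C * (\<integral>\<^sup>+y. K y \<partial>\<Gamma> x)"
        using K_meas[OF x] by (simp add: nn_integral_cmult mult.assoc)
      finally have "w x \<le> ennreal \<beta> * (ennreal (?q ^ n) * C * (\<integral>\<^sup>+y. K y \<partial>\<Gamma> x))"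
        using w_sub[OF x] by (meson order_trans mult_left_mono zero_le)
      also have "\<dots> = ennreal (?q ^ Suc n) * C * (ennreal \<delta> * (\<integral>\<^sup>+y. K y \<partial>\<Gamma> x))"
        unfolding \<beta>_eq power_Suc ennreal_mult'[OF q(1)] by (simp only: mult_ac)
      also have "\<dots> \<le> ennreal (?q ^ Suc n) * (C * K x)"
        using K_excessive[OF x] by (simp add: mult.assoc mult_left_mono)
      finally show "w x \<le> ennreal (?q ^ Suc n) * (C * K x)" .
    qed
  qed
  have "C * K x < \<infinity>"
    using C_finite Kx_finite by (simp add: ennreal_mult_less_top)
  then obtain c where c: "C * K x = ennreal c" "0 \<le> c"
    by (cases "C * K x") auto
  have "(\<lambda>n. ennreal (?q ^ n * c)) \<longlonglongrightarrow> ennreal (0 * c)"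
    using q by (intro tendsto_ennrealI tendsto_mult_right LIMSEQ_power_zero) auto
  moreover have "w x \<le> ennreal (?q ^ n * c)" for n
  proof -
    have "w x \<le> ennreal (?q ^ n) * (C * K x)"
      using decay[of n] x_S by blast
    then show ?thesis
      using c q by (simp add: ennreal_mult')
  qed
  ultimately have "w x \<le> 0"
    by (intro LIMSEQ_le_const) auto
  then show ?thesis by simp
qed

lemma ennreal_integral_le_nn_integral:
  fixes f :: "'a \<Rightarrow> real"
  shows "ennreal (\<integral>x. f x \<partial>M) \<le> (\<integral>\<^sup>+x. ennreal (f x) \<partial>M)"
proof (cases "integrable M f")
  case True
  have "(\<integral>x. f x \<partial>M) \<le> (\<integral>x. max 0 (f x) \<partial>M)"
    using True by (intro integral_mono) auto
  moreover have "ennreal (\<integral>x. max 0 (f x) \<partial>M) = (\<integral>\<^sup>+x. ennreal (f x) \<partial>M)"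
    using True by (subst nn_integral_eq_integral[symmetric]) (auto intro: nn_integral_cong)
  ultimately show ?thesis
    by (metis ennreal_leI)
qed (simp add: not_integrable_integral_eq)

lemma continuous_on_integral_mono_parameter:
  fixes f :: "'a \<Rightarrow> real \<Rightarrow> real"
  assumes cont: "\<And>x. x \<in> space M \<Longrightarrow> continuous_on {a..c} (f x)"
    and mono: "\<And>x s t. x \<in> space M \<Longrightarrow> a \<le> s \<Longrightarrow> s \<le> t \<Longrightarrow> t \<le> c \<Longrightarrow> f x s \<le> f x t"
    and int: "\<And>t. a \<le> t \<Longrightarrow> t \<le> c \<Longrightarrow> integrable M (\<lambda>x. f x t)"
  shows "continuous_on {a..c} (\<lambda>t. \<integral>x. f x t \<partial>M)"
proof (rule continuous_on_sequentiallyI)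
  fix u t assume u: "\<forall>n. u n \<in> {a..c}" and t: "t \<in> {a..c}" and lim: "u \<longlonglongrightarrow> t"
  show "(\<lambda>n. \<integral>x. f x (u n) \<partial>M) \<longlonglongrightarrow> (\<integral>x. f x t \<partial>M)"
  proof (rule integral_dominated_convergence[where w="\<lambda>x. \<bar>f x a\<bar> + \<bar>f x c\<bar>"])
    show "(\<lambda>x. f x t) \<in> borel_measurable M"
      using int[of t] t by auto
    show "(\<lambda>x. f x (u n)) \<in> borel_measurable M" for n
      using int[of "u n"] u by auto
    show "integrable M (\<lambda>x. \<bar>f x a\<bar> + \<bar>f x c\<bar>)"
      using t by (intro Bochner_Integration.integrable_add integrable_abs int) auto
    show "AE x in M. (\<lambda>n. f x (u n)) \<longlonglongrightarrow> f x t"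
    proof (rule AE_I2)
      fix x assume "x \<in> space M"
      then show "(\<lambda>n. f x (u n)) \<longlonglongrightarrow> f x t"
        using u by (intro continuous_on_tendsto_compose[OF cont lim t]) auto
    qed
    show "AE x in M. norm (f x (u n)) \<le> \<bar>f x a\<bar> + \<bar>f x c\<bar>" for n
    proof (rule AE_I2)
      fix x assume "x \<in> space M"
      then have "f x a \<le> f x (u n)" "f x (u n) \<le> f x c"
        using mono[of x a "u n"] mono[of x "u n" c] u by auto
      then show "norm (f x (u n)) \<le> \<bar>f x a\<bar> + \<bar>f x c\<bar>" by auto
    qed
  qed
qed

lemma ex1_pos_solution_strict_mono_on:
  fixes g :: "real \<Rightarrow> real"
  assumes cont: "continuous_on {0..p} g" and mono: "strict_mono_on {0..} g"
    and "0 \<le> p" "g 0 < y" "y \<le> g p"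
  shows "\<exists>!x. 0 < x \<and> g x = y"
proof -
  obtain x where x: "0 \<le> x" "x \<le> p" "g x = y"
    using IVT'[of g 0 y p] assms(3-5) cont by force
  have "x \<noteq> 0"
    using x assms(4) by auto
  then show ?thesis
    using x strict_mono_on_eqD[OF mono] by (intro ex1I[of _ x]) auto
qed

locale entry_exit_value =
  fixes \<Gamma> :: "real \<Rightarrow> real measure" and \<pi> :: "real \<Rightarrow> real \<Rightarrow> real"
    and b \<delta> \<beta> :: real and v :: "real \<Rightarrow> real \<Rightarrow> real"
  assumes kernel: "\<Gamma> \<in> Sp \<rightarrow>\<^sub>M prob_algebra Sp"
    and profit_continuous: "continuous_on ({0..} \<times> {0..}) (\<lambda>(x, y). \<pi> x y)"
    and profit_strict_mono_price: "\<And>\<phi> p p'. 0 \<le> \<phi> \<Longrightarrow> 0 \<le> p \<Longrightarrow> p < p' \<Longrightarrow> \<pi> \<phi> p < \<pi> \<phi> p'"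
    and profit_zero_price: "\<And>\<phi>. 0 \<le> \<phi> \<Longrightarrow> \<pi> \<phi> 0 < 0"
    and profit_shift: "\<And>\<phi> p. 0 \<le> \<phi> \<Longrightarrow> 0 \<le> p \<Longrightarrow> 1 \<le> \<pi> \<phi> p + b"
    and profit_integrable:
      "\<And>\<phi> p t. 0 \<le> \<phi> \<Longrightarrow> 0 \<le> p \<Longrightarrow> integrable (kpow \<Gamma> t \<phi>) (\<lambda>\<phi>'. \<pi> \<phi>' p)"
    and kappa_summable: "\<And>\<phi> p. 0 \<le> \<phi> \<Longrightarrow> 0 \<le> p \<Longrightarrow>
      summable (\<lambda>t. \<delta> ^ t * (\<integral>\<phi>'. (\<pi> \<phi>' p + b) \<partial>kpow \<Gamma> t \<phi>))"
    and discount: "0 < \<beta>" "\<beta> < \<delta>"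
    and v_Cspace: "v \<in> Cspace \<Gamma> \<pi> b \<delta>"
    and v_bellman: "\<And>\<phi> p. 0 \<le> \<phi> \<Longrightarrow> 0 \<le> p \<Longrightarrow> bellman \<Gamma> \<pi> \<beta> v \<phi> p = v \<phi> p"
begin

abbreviation \<kappa> :: "real \<Rightarrow> real \<Rightarrow> real" where
  "\<kappa> \<equiv> kappa \<Gamma> \<pi> b \<delta>"

(* The weight kappa as an ennreal-valued resolvent: measurability and the interchange of sum
   and integrals then hold without integrability side conditions. *)
abbreviation kappa_ennreal :: "real \<Rightarrow> real \<Rightarrow> ennreal" where
  "kappa_ennreal p \<equiv> kernel_resolvent \<Gamma> \<delta> (\<lambda>y. ennreal (\<pi> y p + b))"

lemma profit_measurable: "0 \<le> p \<Longrightarrow> (\<lambda>x. \<pi> x p) \<in> borel_measurable Sp"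
  by (intro borel_measurable_Sp_continuous_on continuous_on_slice_fst[OF profit_continuous]) simp

lemma profit_shift_measurable: "0 \<le> p \<Longrightarrow> (\<lambda>x. ennreal (\<pi> x p + b)) \<in> borel_measurable Sp"
  by (intro measurable_compose[OF _ measurable_ennreal] borel_measurable_add profit_measurable
      borel_measurable_const)

lemma kappa_ennreal_measurable: "0 \<le> p \<Longrightarrow> kappa_ennreal p \<in> borel_measurable Sp"
  by (intro borel_measurable_kernel_resolvent kernel profit_shift_measurable)

lemma kpow_profit_shift:
  assumes "0 \<le> \<phi>" "0 \<le> p"
  shows "0 \<le> (\<integral>\<phi>'. (\<pi> \<phi>' p + b) \<partial>kpow \<Gamma> t \<phi>)"
    and "(\<integral>\<^sup>+\<phi>'. ennreal (\<pi> \<phi>' p + b) \<partial>kpow \<Gamma> t \<phi>) = ennreal (\<integral>\<phi>'. (\<pi> \<phi>' p + b) \<partial>kpow \<Gamma> t \<phi>)"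
proof -
  have kpow: "kpow \<Gamma> t \<phi> \<in> space (prob_algebra Sp)"
    using kpow_in_prob_algebra[OF kernel] assms(1) by (simp add: space_Sp)
  then interpret prob_space "kpow \<Gamma> t \<phi>"
    by (simp add: space_prob_algebra)
  have nonneg: "AE \<phi>' in kpow \<Gamma> t \<phi>. 0 \<le> \<pi> \<phi>' p + b"
    using kpow profit_shift[OF _ assms(2)]
    by (intro AE_I2) (force simp: space_prob_algebra space_eq_Sp)
  have "integrable (kpow \<Gamma> t \<phi>) (\<lambda>\<phi>'. \<pi> \<phi>' p + b)"
    using profit_integrable[OF assms] by simp
  then show "0 \<le> (\<integral>\<phi>'. (\<pi> \<phi>' p + b) \<partial>kpow \<Gamma> t \<phi>)"
    and "(\<integral>\<^sup>+\<phi>'. ennreal (\<pi> \<phi>' p + b) \<partial>kpow \<Gamma> t \<phi>) = ennreal (\<integral>\<phi>'. (\<pi> \<phi>' p + b) \<partial>kpow \<Gamma> t \<phi>)"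
    using integral_nonneg_AE[OF nonneg] nn_integral_eq_integral[OF _ nonneg] by simp_all
qed

lemma kappa_nonneg: "0 \<le> \<phi> \<Longrightarrow> 0 \<le> p \<Longrightarrow> 0 \<le> \<kappa> \<phi> p"
  unfolding kappa_def using kappa_summable kpow_profit_shift(1) discount
  by (intro suminf_nonneg) auto

lemma ennreal_kappa:
  assumes "0 \<le> \<phi>" "0 \<le> p"
  shows "ennreal (\<kappa> \<phi> p) = kappa_ennreal p \<phi>"
proof -
  have "kappa_ennreal p \<phi> = (\<Sum>t. ennreal (\<delta> ^ t * (\<integral>\<phi>'. (\<pi> \<phi>' p + b) \<partial>kpow \<Gamma> t \<phi>)))"
    unfolding kernel_resolvent_def using kpow_profit_shift[OF assms] discount
    by (simp add: ennreal_mult)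
  also have "\<dots> = ennreal (\<kappa> \<phi> p)"
    unfolding kappa_def using kpow_profit_shift(1)[OF assms] discount kappa_summable[OF assms]
    by (intro suminf_ennreal2) auto
  finally show ?thesis ..
qed

lemma kappa_integrable:
  assumes N: "sets N = sets Sp" and fin: "(\<integral>\<^sup>+\<phi>. kappa_ennreal p \<phi> \<partial>N) < \<infinity>" and p: "0 \<le> p"
  shows "integrable N (\<lambda>\<phi>. \<kappa> \<phi> p)"
proof (rule integrableI_nonneg)
  have "\<kappa> \<phi> p = enn2real (kappa_ennreal p \<phi>)" if "\<phi> \<in> space N" for \<phi>
    using that kappa_nonneg[OF _ p] by (simp add: space_eq_Sp[OF N] flip: ennreal_kappa[OF _ p])
  moreover have "(\<lambda>\<phi>. enn2real (kappa_ennreal p \<phi>)) \<in> borel_measurable N"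
    using kappa_ennreal_measurable[OF p] by (simp add: measurable_cong_sets[OF N refl])
  ultimately show "(\<lambda>\<phi>. \<kappa> \<phi> p) \<in> borel_measurable N"
    by (simp cong: measurable_cong)
  show "AE \<phi> in N. 0 \<le> \<kappa> \<phi> p"
    using kappa_nonneg[OF _ p] by (intro AE_I2) (simp add: space_eq_Sp[OF N])
  have "(\<integral>\<^sup>+\<phi>. ennreal (\<kappa> \<phi> p) \<partial>N) = (\<integral>\<^sup>+\<phi>. kappa_ennreal p \<phi> \<partial>N)"
    using ennreal_kappa[OF _ p] by (intro nn_integral_cong) (simp add: space_eq_Sp[OF N])
  then show "(\<integral>\<^sup>+\<phi>. ennreal (\<kappa> \<phi> p) \<partial>N) < \<infinity>"
    using fin by simp
qed

lemma v_kappa_bound: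
  obtains M where "0 \<le> M" "\<And>\<phi> p. 0 \<le> \<phi> \<Longrightarrow> 0 \<le> p \<Longrightarrow> \<bar>v \<phi> p\<bar> \<le> M * \<kappa> \<phi> p"
proof -
  obtain M where M: "\<And>\<phi> p. 0 \<le> \<phi> \<Longrightarrow> 0 \<le> p \<Longrightarrow> \<bar>v \<phi> p\<bar> \<le> M * \<kappa> \<phi> p"
    using v_Cspace by (auto simp: Cspace_def)
  have "\<bar>v \<phi> p\<bar> \<le> max M 0 * \<kappa> \<phi> p" if "0 \<le> \<phi>" "0 \<le> p" for \<phi> p
    using M[OF that] mult_right_mono[OF max.cobounded1[of M 0] kappa_nonneg[OF that]] by linarith
  then show ?thesis
    using that[of "max M 0"] by simp
qed

lemma v_continuous: "continuous_on ({0..} \<times> {0..}) (\<lambda>(x, y). v x y)"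
  using v_Cspace by (simp add: Cspace_def)

lemma v_mono: "0 \<le> \<phi> \<Longrightarrow> \<phi> \<le> \<phi>' \<Longrightarrow> 0 \<le> p \<Longrightarrow> p \<le> p' \<Longrightarrow> v \<phi> p \<le> v \<phi>' p'"
  using v_Cspace by (simp add: Cspace_def incr2_def)

lemma v_measurable: "0 \<le> p \<Longrightarrow> (\<lambda>\<phi>. v \<phi> p) \<in> borel_measurable Sp"
  by (intro borel_measurable_Sp_continuous_on continuous_on_slice_fst[OF v_continuous]) simp

lemma v_integrable:
  assumes N: "sets N = sets Sp" and fin: "(\<integral>\<^sup>+\<phi>. kappa_ennreal p \<phi> \<partial>N) < \<infinity>" and p: "0 \<le> p"
  shows "integrable N (\<lambda>\<phi>. v \<phi> p)"
proof -
  obtain M where M: "0 \<le> M" "\<And>\<phi> p. 0 \<le> \<phi> \<Longrightarrow> 0 \<le> p \<Longrightarrow> \<bar>v \<phi> p\<bar> \<le> M * \<kappa> \<phi> p"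
    using v_kappa_bound by blast
  show ?thesis
  proof (rule Bochner_Integration.integrable_bound)
    show "integrable N (\<lambda>\<phi>. M * \<kappa> \<phi> p)"
      using kappa_integrable[OF assms] by simp
    show "(\<lambda>\<phi>. v \<phi> p) \<in> borel_measurable N"
      using v_measurable[OF p] by (simp add: measurable_cong_sets[OF N refl])
    show "AE \<phi> in N. norm (v \<phi> p) \<le> norm (M * \<kappa> \<phi> p)"
      using M kappa_nonneg[OF _ p] p by (intro AE_I2) (auto simp: space_eq_Sp[OF N])
  qed
qed

lemma sets_Gamma: "0 \<le> \<phi> \<Longrightarrow> sets (\<Gamma> \<phi>) = sets Sp"
  using measurable_space[OF kernel, of \<phi>] by (simp add: space_Sp space_prob_algebra)

lemma kappa_ennreal_Gamma_finite:
  assumes "0 \<le> \<phi>" "0 \<le> p"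
  shows "(\<integral>\<^sup>+y. kappa_ennreal p y \<partial>\<Gamma> \<phi>) < \<infinity>"
proof -
  have "ennreal \<delta> * (\<integral>\<^sup>+y. kappa_ennreal p y \<partial>\<Gamma> \<phi>) \<le> kappa_ennreal p \<phi>"
    using assms discount
    by (intro kernel_resolvent_excessive kernel profit_shift_measurable) (simp_all add: space_Sp)
  also have "\<dots> < \<infinity>"
    unfolding ennreal_kappa[OF assms, symmetric] by simp
  finally have "ennreal \<delta> * (\<integral>\<^sup>+y. kappa_ennreal p y \<partial>\<Gamma> \<phi>) < \<infinity>" .
  moreover have "ennreal \<delta> \<noteq> 0"
    using discount by simp
  ultimately show ?thesis
    by (auto simp: ennreal_mult_less_top)
qed

lemma v_integrable_Gamma: "0 \<le> \<phi> \<Longrightarrow> 0 \<le> p \<Longrightarrow> integrable (\<Gamma> \<phi>) (\<lambda>y. v y p)"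
  by (intro v_integrable sets_Gamma kappa_ennreal_Gamma_finite)

lemma v_eq: "0 \<le> \<phi> \<Longrightarrow> 0 \<le> p \<Longrightarrow> v \<phi> p = \<pi> \<phi> p + \<beta> * max 0 (\<integral>y. v y p \<partial>\<Gamma> \<phi>)"
  using v_bellman by (simp add: bellman_def)

lemma profit_le_v: "0 \<le> \<phi> \<Longrightarrow> 0 \<le> p \<Longrightarrow> \<pi> \<phi> p \<le> v \<phi> p"
  using v_eq discount by simp

lemma v_strict_mono_price:
  assumes "0 \<le> \<phi>" "0 \<le> p" "p < p'"
  shows "v \<phi> p < v \<phi> p'"
proof -
  have "(\<integral>y. v y p \<partial>\<Gamma> \<phi>) \<le> (\<integral>y. v y p' \<partial>\<Gamma> \<phi>)"
    using assms v_mono by (intro integral_mono v_integrable_Gamma)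
      (auto simp: space_eq_Sp[OF sets_Gamma[OF assms(1)]])
  then have "\<beta> * max 0 (\<integral>y. v y p \<partial>\<Gamma> \<phi>) \<le> \<beta> * max 0 (\<integral>y. v y p' \<partial>\<Gamma> \<phi>)"
    using discount by (intro mult_left_mono) auto
  then show ?thesis
    using v_eq[OF assms(1,2)] v_eq[of \<phi> p'] profit_strict_mono_price[OF assms] assms by simp
qed

lemma v_zero_price_nonpos:
  assumes "0 \<le> \<phi>"
  shows "v \<phi> 0 \<le> 0"
proof -
  obtain M where M: "0 \<le> M" "\<And>\<phi> p. 0 \<le> \<phi> \<Longrightarrow> 0 \<le> p \<Longrightarrow> \<bar>v \<phi> p\<bar> \<le> M * \<kappa> \<phi> p"
    using v_kappa_bound by blast
  have "ennreal (v \<phi> 0) = 0"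
  proof (rule dominated_subinvariant_eq_0[where S="{0..}" and \<Gamma>=\<Gamma> and K="kappa_ennreal 0"
        and w="\<lambda>x. ennreal (v x 0)" and C="ennreal M" and x=\<phi>])
    fix x :: real assume x: "x \<in> {0..}"
    then show "ennreal \<delta> * (\<integral>\<^sup>+y. kappa_ennreal 0 y \<partial>\<Gamma> x) \<le> kappa_ennreal 0 x"
      using discount
      by (intro kernel_resolvent_excessive kernel profit_shift_measurable) (simp_all add: space_Sp)
    show "kappa_ennreal 0 \<in> borel_measurable (\<Gamma> x)"
      using kappa_ennreal_measurable[of 0] x by (simp add: measurable_cong_sets[OF sets_Gamma refl])
    show "space (\<Gamma> x) \<subseteq> {0..}"
      using x by (simp add: space_eq_Sp[OF sets_Gamma])
    have "v x 0 \<le> \<beta> * max 0 (\<integral>y. v y 0 \<partial>\<Gamma> x)"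
      using v_eq[of x 0] profit_zero_price[of x] x by simp
    then have "ennreal (v x 0) \<le> ennreal (\<beta> * max 0 (\<integral>y. v y 0 \<partial>\<Gamma> x))"
      by (rule ennreal_leI)
    also have "\<dots> = ennreal \<beta> * ennreal (\<integral>y. v y 0 \<partial>\<Gamma> x)"
      using discount by (simp add: ennreal_mult' ennreal_max_0)
    also have "\<dots> \<le> ennreal \<beta> * (\<integral>\<^sup>+y. ennreal (v y 0) \<partial>\<Gamma> x)"
      by (intro mult_left_mono ennreal_integral_le_nn_integral) simp
    finally show "ennreal (v x 0) \<le> ennreal \<beta> * (\<integral>\<^sup>+y. ennreal (v y 0) \<partial>\<Gamma> x)" .
    have "ennreal (v x 0) \<le> ennreal (M * \<kappa> x 0)"
      using M(2)[of x 0] x by (intro ennreal_leI) simp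
    then show "ennreal (v x 0) \<le> ennreal M * kappa_ennreal 0 x"
      using M(1) x by (simp add: ennreal_mult' ennreal_kappa)
  next
    show "kappa_ennreal 0 \<phi> < \<infinity>"
      unfolding ennreal_kappa[OF assms order_refl, symmetric] by simp
  qed (use assms discount in auto)
  then show ?thesis
    by (simp only: ennreal_eq_0_iff)
qed

end

locale entry_exit_equilibrium = entry_exit_value +
  fixes \<gamma> :: "real measure"
  assumes entrant_distribution: "\<gamma> \<in> space (prob_algebra Sp)"
    and discount_lt_1: "\<delta> < 1"
    and entrant_profit_integrable: "\<And>p t. 0 \<le> p \<Longrightarrow> integrable (\<gamma> \<bind> kpow \<Gamma> t) (\<lambda>\<phi>. \<pi> \<phi> p)"
    and entrant_profit_summable:
      "\<And>p. 0 \<le> p \<Longrightarrow> summable (\<lambda>t. \<delta> ^ t * (\<integral>\<phi>. \<pi> \<phi> p \<partial>(\<gamma> \<bind> kpow \<Gamma> t)))"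
begin

interpretation entrant: prob_space \<gamma>
  using entrant_distribution by (simp add: space_prob_algebra)

abbreviation entry_value :: "real \<Rightarrow> real" where
  "entry_value p \<equiv> \<integral>\<phi>. v \<phi> p \<partial>\<gamma>"

lemma sets_entrant: "sets \<gamma> = sets Sp"
  using entrant_distribution by (simp add: space_prob_algebra)

lemma kappa_ennreal_entrant_finite:
  assumes p: "0 \<le> p"
  shows "(\<integral>\<^sup>+\<phi>. kappa_ennreal p \<phi> \<partial>\<gamma>) < \<infinity>"
proof -
  let ?I = "\<lambda>t. \<integral>\<phi>. \<pi> \<phi> p \<partial>(\<gamma> \<bind> kpow \<Gamma> t)"
  have shifted: "0 \<le> ?I t + b \<and> (\<integral>\<^sup>+\<phi>. ennreal (\<pi> \<phi> p + b) \<partial>(\<gamma> \<bind> kpow \<Gamma> t)) = ennreal (?I t + b)"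
    for t
  proof -
    have sets: "sets (\<gamma> \<bind> kpow \<Gamma> t) = sets Sp"
      by (rule sets_bind'[OF entrant_distribution kpow_measurable[OF kernel]])
    interpret prob_space "\<gamma> \<bind> kpow \<Gamma> t"
      by (rule prob_space_bind'[OF entrant_distribution kpow_measurable[OF kernel]])
    have nonneg: "AE \<phi> in \<gamma> \<bind> kpow \<Gamma> t. 0 \<le> \<pi> \<phi> p + b"
      using profit_shift[OF _ p] by (intro AE_I2) (force simp: space_eq_Sp[OF sets])
    have int: "integrable (\<gamma> \<bind> kpow \<Gamma> t) (\<lambda>\<phi>. \<pi> \<phi> p + b)"
      using entrant_profit_integrable[OF p] by simp
    have "(\<integral>\<phi>. (\<pi> \<phi> p + b) \<partial>(\<gamma> \<bind> kpow \<Gamma> t)) = ?I t + b"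
      using entrant_profit_integrable[OF p] by (simp add: prob_space)
    then show ?thesis
      using integral_nonneg_AE[OF nonneg] nn_integral_eq_integral[OF int nonneg] by simp
  qed
  have "(\<integral>\<^sup>+\<phi>. kappa_ennreal p \<phi> \<partial>\<gamma>) = (\<Sum>t. ennreal (\<delta> ^ t * (?I t + b)))"
    using shifted discount
    by (simp add: nn_integral_kernel_resolvent[OF kernel profit_shift_measurable[OF p] sets_entrant]
        ennreal_mult)
  also have "\<dots> < \<infinity>"
  proof -
    have "summable (\<lambda>t. \<delta> ^ t * ?I t + b * \<delta> ^ t)"
      using entrant_profit_summable[OF p] discount discount_lt_1
      by (intro summable_add summable_mult summable_geometric) auto
    then have "summable (\<lambda>t. \<delta> ^ t * (?I t + b))"
      by (simp add: algebra_simps)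
    then show ?thesis
      using shifted discount by (simp add: ennreal_suminf_neq_top top.not_eq_extremum)
  qed
  finally show ?thesis .
qed

lemma v_integrable_entrant: "0 \<le> p \<Longrightarrow> integrable \<gamma> (\<lambda>\<phi>. v \<phi> p)"
  by (intro v_integrable sets_entrant kappa_ennreal_entrant_finite)

lemma entrant_profit_le_entry_value:
  assumes p: "0 \<le> p"
  shows "(\<integral>\<phi>. \<pi> \<phi> p \<partial>\<gamma>) \<le> entry_value p"
proof (rule integral_mono)
  have "\<gamma> \<bind> kpow \<Gamma> 0 = \<gamma>"
    using bind_return''[OF sets_entrant] by (simp add: fun_eq_iff)
  then show "integrable \<gamma> (\<lambda>\<phi>. \<pi> \<phi> p)"
    using entrant_profit_integrable[OF p, of 0] by simp
qed (use v_integrable_entrant[OF p] profit_le_v p in \<open>auto simp: space_eq_Sp[OF sets_entrant]\<close>)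

lemma entry_value_strict_mono: "strict_mono_on {0..} entry_value"
proof (rule strict_mono_onI)
  fix p p' :: real assume "p \<in> {0..}" "p' \<in> {0..}" "p < p'"
  then show "entry_value p < entry_value p'"
    using v_strict_mono_price v_integrable_entrant entrant.emeasure_space_1
    by (intro entrant.integral_less_AE_space AE_I2) (auto simp: space_eq_Sp[OF sets_entrant])
qed

lemma entry_value_continuous: "0 \<le> c \<Longrightarrow> continuous_on {0..c} entry_value"
  using v_mono v_integrable_entrant
  by (intro continuous_on_integral_mono_parameter
      continuous_on_subset[OF continuous_on_slice_snd[OF v_continuous]])
    (auto simp: space_eq_Sp[OF sets_entrant])

lemma entry_value_zero_nonpos: "entry_value 0 \<le> 0"
proof -
  have "entry_value 0 \<le> (\<integral>\<phi>. 0 \<partial>\<gamma>)"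
    using v_integrable_entrant[of 0] v_zero_price_nonpos
    by (intro integral_mono) (auto simp: space_eq_Sp[OF sets_entrant])
  then show ?thesis
    by simp
qed

theorem ex1_free_entry_price:
  assumes "0 < c" "\<exists>p>0. c \<le> (\<integral>\<phi>. \<pi> \<phi> p \<partial>\<gamma>)"
  shows "\<exists>!p. 0 < p \<and> entry_value p = c"
proof -
  obtain p where p: "0 < p" "c \<le> (\<integral>\<phi>. \<pi> \<phi> p \<partial>\<gamma>)"
    using assms(2) by blast
  show ?thesis
  proof (rule ex1_pos_solution_strict_mono_on[OF entry_value_continuous entry_value_strict_mono])
    show "entry_value 0 < c"
      using entry_value_zero_nonpos assms(1) by linarith
    show "c \<le> entry_value p"
      using p entrant_profit_le_entry_value[of p] by linarith
  qed (use p in auto)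
qed

end

theorem lemma3:
  fixes D :: "real \<Rightarrow> ereal"
    and \<pi> q :: "real \<Rightarrow> real \<Rightarrow> real"
    and \<Gamma> :: "real \<Rightarrow> real measure"
    and \<gamma> :: "real measure"
    and r \<beta> c\<^sub>e \<delta> b :: real
    and v :: "real \<Rightarrow> real \<Rightarrow> real"
  assumes
    \<comment> \<open>(A1)\<close>
    A1_cont: "continuous_on {0..} D"
    and A1_dec: "\<And>p p'. 0 \<le> p \<Longrightarrow> p < p' \<Longrightarrow> D p' < D p"
    and A1_0: "D 0 = \<infinity>"
    and A1_lim: "(D \<longlongrightarrow> 0) at_top"
    \<comment> \<open>(A2)\<close>
    and A2_cont_pi: "continuous_on ({0..} \<times> {0..}) (\<lambda>(x, y). \<pi> x y)"
    and A2_cont_q: "continuous_on ({0..} \<times> {0..}) (\<lambda>(x, y). q x y)"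
    and A2_incr_pi: "strict_incr2 \<pi>"
    and A2_incr_q: "strict_incr2 q"
    and A2_q_nonneg: "\<And>\<phi> p. 0 \<le> \<phi> \<Longrightarrow> 0 \<le> p \<Longrightarrow> 0 \<le> q \<phi> p"
    and A2_pi_neg: "\<And>\<phi> p. 0 \<le> \<phi> \<Longrightarrow> 0 \<le> p \<Longrightarrow> \<phi> = 0 \<or> p = 0 \<Longrightarrow> \<pi> \<phi> p < 0"
    \<comment> \<open>(A3)\<close>
    and A3_kernel: "\<Gamma> \<in> Sp \<rightarrow>\<^sub>M prob_algebra Sp"
    and A3_mono: "\<And>a \<phi> \<phi>'. 0 \<le> a \<Longrightarrow> 0 \<le> \<phi> \<Longrightarrow> \<phi> \<le> \<phi>' \<Longrightarrow>
                     measure (\<Gamma> \<phi>') {0..a} \<le> measure (\<Gamma> \<phi>) {0..a}"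
    and A3a: "\<And>a \<phi>. 0 < a \<Longrightarrow> 0 \<le> \<phi> \<Longrightarrow> \<exists>n. measure (kpow \<Gamma> n \<phi>) {0..<a} > 0"
    and A3b: "\<And>p. 0 < p \<Longrightarrow> \<exists>\<phi>\<ge>0. (\<integral>\<phi>'. \<pi> \<phi>' p \<partial>(\<Gamma> \<phi>)) \<ge> 0"
    and r_pos: "0 < r"
    and beta_def: "\<beta> = 1 / (1 + r)"
    \<comment> \<open>(A4)\<close>
    and A4_prob: "\<gamma> \<in> space (prob_algebra Sp)"
    and A4_int: "\<And>p. 0 \<le> p \<Longrightarrow> integrable \<gamma> (\<lambda>\<phi>. q \<phi> p)"
    and A4_pos: "\<And>a. 0 < a \<Longrightarrow> measure \<gamma> {0..a} > 0"
    and ce_pos: "0 < c\<^sub>e"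
    \<comment> \<open>(A5)\<close>
    and A5: "\<exists>p>0. (\<integral>\<phi>. \<pi> \<phi> p \<partial>\<gamma>) \<ge> c\<^sub>e"
    \<comment> \<open>(A6)\<close>
    and A6: "\<And>p. 0 \<le> p \<Longrightarrow> (\<Sum>t. \<beta> ^ t * (\<integral>\<phi>'. \<pi> \<phi>' p \<partial>(kpow \<Gamma> t 0))) \<le> 0"
    \<comment> \<open>(A7): the series of E pi(phi_t,p), phi_0 ~ gamma, is finite\<close>
    and A7_delta: "\<beta> < \<delta>" "\<delta> < 1"
    and A7_int: "\<And>p t. 0 \<le> p \<Longrightarrow> integrable (bind \<gamma> (kpow \<Gamma> t)) (\<lambda>\<phi>. \<pi> \<phi> p)"
    and A7_sum: "\<And>p. 0 \<le> p \<Longrightarrow>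
                   summable (\<lambda>t. \<delta> ^ t * (\<integral>\<phi>. \<pi> \<phi> p \<partial>(bind \<gamma> (kpow \<Gamma> t))))"
    \<comment> \<open>the constant b and finiteness of kappa\<close>
    and b_bound: "\<And>\<phi> p. 0 \<le> \<phi> \<Longrightarrow> 0 \<le> p \<Longrightarrow> \<pi> \<phi> p + b \<ge> 1"
    and kappa_int: "\<And>\<phi> p t. 0 \<le> \<phi> \<Longrightarrow> 0 \<le> p \<Longrightarrow> integrable (kpow \<Gamma> t \<phi>) (\<lambda>\<phi>'. \<pi> \<phi>' p)"
    and kappa_fin: "\<And>\<phi> p. 0 \<le> \<phi> \<Longrightarrow> 0 \<le> p \<Longrightarrow>
                   summable (\<lambda>t. \<delta> ^ t * (\<integral>\<phi>'. (\<pi> \<phi>' p + b) \<partial>(kpow \<Gamma> t \<phi>)))"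
    \<comment> \<open>(A8)\<close>
    and A8: "\<And>u. u \<in> Cspace \<Gamma> \<pi> b \<delta> \<Longrightarrow>
               continuous_on ({0..} \<times> {0..}) (\<lambda>(\<phi>, p). \<integral>\<phi>'. u \<phi>' p \<partial>(\<Gamma> \<phi>))"
    \<comment> \<open>v is the fixed point v* of the Bellman operator in script-C\<close>
    and v_C: "v \<in> Cspace \<Gamma> \<pi> b \<delta>"
    and v_fix: "\<And>\<phi> p. 0 \<le> \<phi> \<Longrightarrow> 0 \<le> p \<Longrightarrow> bellman \<Gamma> \<pi> \<beta> v \<phi> p = v \<phi> p"
  shows "\<exists>!p. 0 < p \<and> (\<integral>\<phi>. v \<phi> p \<partial>\<gamma>) = c\<^sub>e"
proof -
  have "0 < \<beta>"
    using beta_def r_pos by simp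
  moreover have "\<pi> \<phi> p < \<pi> \<phi> p'" if "0 \<le> \<phi>" "0 \<le> p" "p < p'" for \<phi> p p'
    using A2_incr_pi that unfolding strict_incr2_def by fastforce
  ultimately interpret entry_exit_equilibrium \<Gamma> \<pi> b \<delta> \<beta> v \<gamma>
    using A3_kernel A2_cont_pi A2_pi_neg b_bound kappa_int kappa_fin A7_delta v_C v_fix
      A4_prob A7_int A7_sum
    by unfold_locales auto
  show ?thesis
    using ex1_free_entry_price[OF ce_pos A5] .
qed

end
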